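(* Let $X=(|X|,X^0,\mathbb{P}^{\mathrm{top}}X)$ be a multipointed $d$-space. Let $d(X)$ be the set of continuous paths $[0,1]\to|X|$ consisting of all constant paths together with all Moore compositions of the form \[(\gamma_1\phi_1\mu_{\ell_1})*\dots*(\gamma_n\phi_n\mu_{\ell_n})\] with $n\ge 1$, $\ell_1,\dots,\ell_n>0$, $\ell_1+\dots+\ell_n=1$, where $\gamma_1,\dots,\gamma_n$ are execution paths of $X$ and $\phi_i\in\mathcal{I}(1)$ for $i=1,\dots,n$. Then the pair $\vec{\mathrm{Sp}}(X):=(|X|,d(X))$ is a directed space, and the mapping $X\mapsto\vec{\mathrm{Sp}}(X)$, sending a map of multipointed $d$-spaces to the same underlying continuous map, is a well-defined functor $\vec{\mathrm{Sp}}$ from the category of multipointed $d$-spaces to the category of directed spaces.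
   Context: Let $\mathbf{Top}$ be the category of $\Delta$-generated spaces (or of $\Delta$-Hausdorff $\Delta$-generated spaces). For $\ell>0$ let $\mu_\ell:[0,\ell]\to[0,1]$, $\mu_\ell(t)=t/\ell$. For $\ell,\ell'\ge0$, $\mathcal{M}(\ell,\ell')$ is the set of non-decreasing surjective continuous maps $[0,\ell]\to[0,\ell']$, and $\mathcal{I}(\ell)$ is the set of non-decreasing continuous maps $[0,1]\to[0,\ell]$ (constant maps allowed). A Moore path of length $\ell\ge0$ in a space $U$ is a continuous map $[0,\ell]\to U$; the Moore composition of $\gamma_1:[0,\ell_1]\to U$ and $\gamma_2:[0,\ell_2]\to U$ with $\gamma_1(\ell_1)=\gamma_2(0)$ is the path $\gamma_1*\gamma_2:[0,\ell_1+\ell_2]\to U$ equal to $\gamma_1(t)$ for $t\in[0,\ell_1]$ and $\gamma_2(t-\ell_1)$ for $t\in[\ell_1,\ell_1+\ell_2]$ (it is associative). For $\gamma_1,\gamma_2:[0,1]\to U$ with $\gamma_1(1)=\gamma_2(0)$ the normalized composition is $\gamma_1*_N\gamma_2=(\gamma_1\mu_{1/2})*(\gamma_2\mu_{1/2})$. A multipointed $d$-space is a triple $X=(|X|,X^0,\mathbb{P}^{\mathrm{top}}X)$ where $|X|$ is a space, $X^0\subset|X|$ is a set (the states), and $\mathbb{P}^{\mathrm{top}}X$ is a set of continuous maps $[0,1]\to|X|$ (execution paths) such that: $\gamma(0),\gamma(1)\in X^0$ for every execution path $\gamma$; $\gamma\phi$ is an execution path for every execution path $\gamma$ and every $\phi\in\mathcal{M}(1,1)$;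 $\gamma_1*_N\gamma_2$ is an execution path for composable execution paths $\gamma_1,\gamma_2$. A map $f:X\to Y$ of multipointed $d$-spaces is a continuous map $f:|X|\to|Y|$ with $f(X^0)\subset Y^0$ and $f\gamma\in\mathbb{P}^{\mathrm{top}}Y$ for all $\gamma\in\mathbb{P}^{\mathrm{top}}X$. A directed space is a pair $Y=(|Y|,d(Y))$ where $|Y|$ is a space and $d(Y)$ is a set of continuous maps $[0,1]\to|Y|$ (directed paths) which contains all constant paths, is closed under normalized composition, and satisfies $\gamma\phi\in d(Y)$ for all $\gamma\in d(Y)$, $\phi\in\mathcal{I}(1)$. A morphism of directed spaces is a continuous map of underlying spaces sending directed paths to directed paths. *)

theory Defs
  imports "HOL-Analysis.Analysis" "HOL-Homology.Simplices"
begin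

abbreviation simplex_top :: "nat \<Rightarrow> (nat \<Rightarrow> real) topology" where
  "simplex_top n \<equiv> subtopology (powertop_real UNIV) (standard_simplex n)"

definition delta_generated :: "'a topology \<Rightarrow> bool" where
  "delta_generated T \<longleftrightarrow>
     (\<forall>U. U \<subseteq> topspace T \<longrightarrow>
        (\<forall>n \<sigma>. continuous_map (simplex_top n) T \<sigma> \<longrightarrow>
               openin (simplex_top n) {s \<in> standard_simplex n. \<sigma> s \<in> U})
        \<longrightarrow> openin T U)"

text \<open>Paths [0,ell] -> U are represented as functions on real; only their values
  on [0,ell] are relevant. A path belongs to a set of paths S if it agrees on [0,1]
  with some member of S.\<close>
definition path_in :: "(real \<Rightarrow> 'a) set \<Rightarrow> (real \<Rightarrow> 'a) \<Rightarrow> bool" where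
  "path_in S g \<longleftrightarrow> (\<exists>h\<in>S. \<forall>t\<in>{0..1}. g t = h t)"

definition mu :: "real \<Rightarrow> real \<Rightarrow> real" where
  "mu l t = t / l"

definition Mset :: "real \<Rightarrow> real \<Rightarrow> (real \<Rightarrow> real) set" where
  "Mset l l' = {\<phi>. continuous_on {0..l} \<phi> \<and> mono_on {0..l} \<phi> \<and> \<phi> ` {0..l} = {0..l'}}"

definition Iset :: "real \<Rightarrow> (real \<Rightarrow> real) set" where
  "Iset l = {\<phi>. continuous_on {0..1} \<phi> \<and> mono_on {0..1} \<phi> \<and> \<phi> ` {0..1} \<subseteq> {0..l}}"

text \<open>Iterated Moore composition of a non-empty list of (length, path) pairs
  (gamma_1 * ... * gamma_n); associativity makes the bracketing irrelevant.\<close>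
fun moore :: "(real \<times> (real \<Rightarrow> 'a)) list \<Rightarrow> real \<Rightarrow> 'a" where
  "moore [] t = undefined"
| "moore [(l, g)] t = g t"
| "moore ((l, g) # p # ps) t = (if t \<le> l then g t else moore (p # ps) (t - l))"

definition norm_comp :: "(real \<Rightarrow> 'a) \<Rightarrow> (real \<Rightarrow> 'a) \<Rightarrow> real \<Rightarrow> 'a" where
  "norm_comp g1 g2 = moore [(1/2, g1 \<circ> mu (1/2)), (1/2, g2 \<circ> mu (1/2))]"

record 'a mdspace =
  mtop :: "'a topology"
  states :: "'a set"
  epaths :: "(real \<Rightarrow> 'a) set"

definition is_mdspace :: "'a mdspace \<Rightarrow> bool" where
  "is_mdspace X \<longleftrightarrow>
     delta_generated (mtop X) \<and>
     states X \<subseteq> topspace (mtop X) \<and>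
     (\<forall>\<gamma>\<in>epaths X. continuous_map (top_of_set {0..1}) (mtop X) \<gamma>) \<and>
     (\<forall>\<gamma>\<in>epaths X. \<gamma> 0 \<in> states X \<and> \<gamma> 1 \<in> states X) \<and>
     (\<forall>\<gamma>\<in>epaths X. \<forall>\<phi>\<in>Mset 1 1. path_in (epaths X) (\<gamma> \<circ> \<phi>)) \<and>
     (\<forall>\<gamma>1\<in>epaths X. \<forall>\<gamma>2\<in>epaths X. \<gamma>1 1 = \<gamma>2 0 \<longrightarrow>
         path_in (epaths X) (norm_comp \<gamma>1 \<gamma>2))"

definition mdmap :: "'a mdspace \<Rightarrow> 'b mdspace \<Rightarrow> ('a \<Rightarrow> 'b) \<Rightarrow> bool" where
  "mdmap X Y f \<longleftrightarrow>
     continuous_map (mtop X) (mtop Y) f \<and>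
     f ` states X \<subseteq> states Y \<and>
     (\<forall>\<gamma>\<in>epaths X. path_in (epaths Y) (f \<circ> \<gamma>))"

record 'a dspace =
  dtop :: "'a topology"
  dpaths :: "(real \<Rightarrow> 'a) set"

definition is_dspace :: "'a dspace \<Rightarrow> bool" where
  "is_dspace Y \<longleftrightarrow>
     delta_generated (dtop Y) \<and>
     (\<forall>\<gamma>\<in>dpaths Y. continuous_map (top_of_set {0..1}) (dtop Y) \<gamma>) \<and>
     (\<forall>x\<in>topspace (dtop Y). path_in (dpaths Y) (\<lambda>t. x)) \<and>
     (\<forall>\<gamma>1\<in>dpaths Y. \<forall>\<gamma>2\<in>dpaths Y. \<gamma>1 1 = \<gamma>2 0 \<longrightarrow>
         path_in (dpaths Y) (norm_comp \<gamma>1 \<gamma>2)) \<and>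
     (\<forall>\<gamma>\<in>dpaths Y. \<forall>\<phi>\<in>Iset 1. path_in (dpaths Y) (\<gamma> \<circ> \<phi>))"

definition dmap :: "'a dspace \<Rightarrow> 'b dspace \<Rightarrow> ('a \<Rightarrow> 'b) \<Rightarrow> bool" where
  "dmap X Y f \<longleftrightarrow>
     continuous_map (dtop X) (dtop Y) f \<and>
     (\<forall>\<gamma>\<in>dpaths X. path_in (dpaths Y) (f \<circ> \<gamma>))"

definition piece :: "real \<times> (real \<Rightarrow> 'a) \<times> (real \<Rightarrow> real) \<Rightarrow> real \<times> (real \<Rightarrow> 'a)" where
  "piece c = (case c of (l, \<gamma>, \<phi>) \<Rightarrow> (l, \<gamma> \<circ> \<phi> \<circ> mu l))"

definition Sp_paths :: "'a mdspace \<Rightarrow> (real \<Rightarrow> 'a) set" where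
  "Sp_paths X =
     {g. (\<exists>x\<in>topspace (mtop X). \<forall>t\<in>{0..1}. g t = x) \<or>
         (\<exists>ps::(real \<times> (real \<Rightarrow> 'a) \<times> (real \<Rightarrow> real)) list.
            ps \<noteq> [] \<and>
            (\<forall>(l, \<gamma>, \<phi>)\<in>set ps. 0 < l \<and> \<gamma> \<in> epaths X \<and> \<phi> \<in> Iset 1) \<and>
            (\<Sum>c\<leftarrow>ps. fst c) = 1 \<and>
            (\<forall>i. Suc i < length ps \<longrightarrow>
               (case (ps ! i, ps ! Suc i) of ((l, \<gamma>, \<phi>), (l', \<gamma>', \<phi>')) \<Rightarrow>
                  \<gamma> (\<phi> 1) = \<gamma>' (\<phi>' 0))) \<and>
            (\<forall>t\<in>{0..1}. g t = moore (map piece ps) t))}"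

definition Sp :: "'a mdspace \<Rightarrow> 'a dspace" where
  "Sp X = \<lparr>dtop = mtop X, dpaths = Sp_paths X\<rparr>"

definition Sp_map :: "('a \<Rightarrow> 'b) \<Rightarrow> ('a \<Rightarrow> 'b)" where
  "Sp_map f = f"

end

theory Submission
  imports Defs
begin

(* Apart from the constant paths, d(X) consists of Moore compositions of pieces
   gamma_i phi_i mu_l_i of execution paths. Call a path g on [0,L] chain-reparametrizable if for
   every non-decreasing continuous phi : [0,m] -> [0,L] with m > 0, the path g o phi is again such
   a Moore composition, of total length m. A single piece is chain-reparametrizable, since I(1) is
   closed under composition with non-decreasing maps, and Moore composition preserves the
   property: a reparametrization of g1 * g2 either stays on one side of the junction L1, or
   crosses it at some u with phi u = L1 (intermediate value theorem) and then splits into a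
   reparametrization of g1 on [0,u] followed by one of g2 on [u,m]. Hence d(X) consists of the
   constant paths and the chain-reparametrizable paths of length 1, and its closure under I(1)
   and under normalized composition follows (a constant half is the other half reparametrized by
   a constant map). Continuity is pasting on closed intervals, and functoriality replaces every
   execution path gamma of a chain by an execution path of Y agreeing with f o gamma on [0,1]. *)

section \<open>Moore composition\<close>

definition moore_comp :: "real \<Rightarrow> (real \<Rightarrow> 'a) \<Rightarrow> (real \<Rightarrow> 'a) \<Rightarrow> real \<Rightarrow> 'a" where
  "moore_comp l g h t = (if t \<le> l then g t else h (t - l))"

abbreviation total_length :: "(real \<times> 'b) list \<Rightarrow> real" where
  "total_length xs \<equiv> (\<Sum>c\<leftarrow>xs. fst c)"

lemma moore_Cons: "xs \<noteq> [] \<Longrightarrow> moore (x # xs) = moore_comp (fst x) (snd x) (moore xs)"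
  by (cases x; cases xs) (auto simp: moore_comp_def fun_eq_iff)

lemma moore_single [simp]: "moore [x] = snd x"
  by (cases x) auto

lemma moore_start: "0 \<le> fst x \<Longrightarrow> moore (x # xs) 0 = snd x 0"
  by (cases x; cases "xs = []") (simp_all add: moore_Cons moore_comp_def)

lemma total_length_nonneg: "\<forall>c\<in>set xs. 0 \<le> fst c \<Longrightarrow> 0 \<le> total_length xs"
  by (induction xs) auto

lemma total_length_pos:
  assumes "xs \<noteq> []" "\<forall>c\<in>set xs. 0 < fst c"
  shows "0 < total_length xs"
proof -
  obtain x xs' where xs: "xs = x # xs'" using assms(1) by (cases xs) auto
  have "0 \<le> total_length xs'" using assms(2) xs total_length_nonneg[of xs'] by fastforce
  then show ?thesis using assms(2) xs by simp
qed

lemma moore_end: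
  assumes "xs \<noteq> []" "\<forall>c\<in>set xs. 0 < fst c"
  shows "moore xs (total_length xs) = snd (last xs) (fst (last xs))"
  using assms
proof (induction xs)
  case (Cons x xs)
  then show ?case
    using total_length_pos[of xs] by (cases x) (auto simp: moore_Cons moore_comp_def)
qed simp

lemma moore_comp_right: "g l = h 0 \<Longrightarrow> l \<le> t \<Longrightarrow> moore_comp l g h t = h (t - l)"
  by (auto simp: moore_comp_def)

lemma moore_comp_assoc:
  "0 \<le> m \<Longrightarrow> moore_comp l g (moore_comp m h k) = moore_comp (l + m) (moore_comp l g h) k"
  by (auto simp: moore_comp_def fun_eq_iff algebra_simps)

lemma moore_append:
  assumes "xs \<noteq> []" "ys \<noteq> []" "\<forall>c\<in>set xs. 0 \<le> fst c"
  shows "moore (xs @ ys) = moore_comp (total_length xs) (moore xs) (moore ys)"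
  using assms
proof (induction xs)
  case (Cons x xs)
  show ?case
  proof (cases "xs = []")
    case True
    with Cons.prems show ?thesis by (cases x) (simp add: moore_Cons)
  next
    case False
    with Cons total_length_nonneg[of xs] show ?thesis
      by (simp add: moore_Cons moore_comp_assoc)
  qed
qed simp

lemma moore_comp_cong:
  assumes "\<forall>t\<in>{0..l}. g t = g' t" "\<forall>t\<in>{0..m}. h t = h' t" "t \<in> {0..l + m}"
  shows "moore_comp l g h t = moore_comp l g' h' t"
  using assms by (auto simp: moore_comp_def)

lemma moore_cong:
  assumes "list_all2 (\<lambda>(l, g) (l', h). l = l' \<and> (\<forall>t\<in>{0..l}. g t = h t)) xs ys"
    and "t \<in> {0..total_length xs}"
  shows "moore xs t = moore ys t"
  using assms
proof (induction xs arbitrary: ys t)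
  case (Cons x xs)
  then obtain y ys' where ys: "ys = y # ys'" and "fst x = fst y" "\<forall>t\<in>{0..fst x}. snd x t = snd y t"
    and rel: "list_all2 (\<lambda>(l, g) (l', h). l = l' \<and> (\<forall>t\<in>{0..l}. g t = h t)) xs ys'"
    by (auto simp: list_all2_Cons1 split: prod.splits)
  moreover have "xs = [] \<longleftrightarrow> ys' = []"
    using rel by auto
  ultimately show ?case
    using Cons.IH[OF rel] Cons.prems(2)
    by (cases "xs = []") (auto simp: moore_Cons intro!: moore_comp_cong)
qed simp

lemma comp_moore: "xs \<noteq> [] \<Longrightarrow> f (moore xs t) = moore (map (\<lambda>(l, g). (l, f \<circ> g)) xs) t"
proof (induction xs arbitrary: t)
  case (Cons x xs)
  then show ?case
    by (cases "xs = []") (auto simp: moore_Cons moore_comp_def split: prod.splits)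
qed simp

lemma norm_comp_eq_moore_comp:
  "norm_comp g1 g2 = moore_comp (1/2) (g1 \<circ> mu (1/2)) (g2 \<circ> mu (1/2))"
  by (simp add: norm_comp_def moore_comp_def fun_eq_iff)

lemma continuous_map_moore_comp:
  assumes g: "continuous_map (top_of_set {0..l}) T g" and h: "continuous_map (top_of_set {0..m}) T h"
    and "g l = h 0" "0 \<le> l" "0 \<le> m"
  shows "continuous_map (top_of_set {0..l + m}) T (moore_comp l g h)"
  unfolding moore_comp_def[abs_def]
proof (rule continuous_map_cases_le[where p = "\<lambda>t. t" and q = "\<lambda>t. l"])
  have "subtopology (top_of_set {0..l + m}) {t \<in> topspace (top_of_set {0..l + m}). t \<le> l}
      = top_of_set {0..l}"
    using assms by (simp add: subtopology_subtopology) (rule arg_cong[where f = top_of_set], auto)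
  then show "continuous_map (subtopology (top_of_set {0..l + m})
      {t \<in> topspace (top_of_set {0..l + m}). t \<le> l}) T g"
    using g by simp
  have "continuous_map (top_of_set {l..l + m}) (top_of_set {0..m}) (\<lambda>t. t - l)"
    by (auto intro!: continuous_intros)
  from continuous_map_compose[OF this h]
  have "continuous_map (top_of_set {l..l + m}) T (\<lambda>t. h (t - l))"
    by (simp add: o_def)
  moreover have "subtopology (top_of_set {0..l + m}) {t \<in> topspace (top_of_set {0..l + m}). l \<le> t}
      = top_of_set {l..l + m}"
    using assms by (simp add: subtopology_subtopology) (rule arg_cong[where f = top_of_set], auto)
  ultimately show "continuous_map (subtopology (top_of_set {0..l + m})
      {t \<in> topspace (top_of_set {0..l + m}). l \<le> t}) T (\<lambda>t. h (t - l))"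
    by simp
qed (use assms in \<open>auto simp: continuous_map_from_subtopology\<close>)

lemma continuous_map_moore:
  assumes "xs \<noteq> []" "\<forall>c\<in>set xs. 0 < fst c \<and> continuous_map (top_of_set {0..fst c}) T (snd c)"
    and "successively (\<lambda>c d. snd c (fst c) = snd d 0) xs"
  shows "continuous_map (top_of_set {0..total_length xs}) T (moore xs)"
  using assms
proof (induction xs)
  case (Cons x xs)
  show ?case
  proof (cases "xs = []")
    case True
    with Cons.prems show ?thesis by (cases x) simp
  next
    case False
    then obtain y ys where xs: "xs = y # ys" by (cases xs) auto
    have "snd x (fst x) = moore xs 0"
      using Cons.prems xs by (cases x; cases y) (auto simp: moore_start)
    moreover have "0 \<le> total_length xs"
      using Cons.prems by (auto intro!: total_length_nonneg)
    ultimately show ?thesis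
      using Cons False by (cases x) (auto simp: moore_Cons successively_Cons intro!: continuous_map_moore_comp)
  qed
qed simp

section \<open>Monotone reparametrizations\<close>

definition monotone_reparam :: "real \<Rightarrow> real \<Rightarrow> (real \<Rightarrow> real) \<Rightarrow> bool" where
  "monotone_reparam m L \<phi> \<longleftrightarrow> continuous_on {0..m} \<phi> \<and> mono_on {0..m} \<phi> \<and> \<phi> ` {0..m} \<subseteq> {0..L}"

lemma Iset_iff_monotone_reparam: "\<phi> \<in> Iset L \<longleftrightarrow> monotone_reparam 1 L \<phi>"
  by (simp add: Iset_def monotone_reparam_def)

lemma monotone_reparam_comp:
  assumes "monotone_reparam L K \<phi>" "monotone_reparam m L \<psi>"
  shows "monotone_reparam m K (\<phi> \<circ> \<psi>)"
  using assms unfolding monotone_reparam_def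
  by (auto intro: continuous_on_compose2 monotone_on_o simp: image_comp[symmetric])

lemma monotone_reparam_mu: "0 < l \<Longrightarrow> monotone_reparam l 1 (mu l)"
  by (auto simp: monotone_reparam_def mu_def intro!: continuous_intros mono_onI divide_right_mono)

lemma monotone_reparam_scale: "0 \<le> m \<Longrightarrow> monotone_reparam 1 m (\<lambda>r. m * r)"
  by (auto simp: monotone_reparam_def intro!: continuous_intros mono_onI mult_left_mono mult_left_le)

lemma monotone_reparam_const: "c \<in> {0..L} \<Longrightarrow> monotone_reparam m L (\<lambda>_. c)"
  by (auto simp: monotone_reparam_def intro: mono_onI)

lemma monotone_reparam_id: "monotone_reparam m m id"
  by (auto simp: monotone_reparam_def intro: mono_onI)

lemma monotone_reparam_le:
  "monotone_reparam m L \<phi> \<Longrightarrow> s \<in> {0..m} \<Longrightarrow> t \<in> {0..m} \<Longrightarrow> s \<le> t \<Longrightarrow> \<phi> s \<le> \<phi> t"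
  unfolding monotone_reparam_def by (meson mono_onD)

lemma monotone_reparam_range: "monotone_reparam m L \<phi> \<Longrightarrow> t \<in> {0..m} \<Longrightarrow> \<phi> t \<in> {0..L}"
  unfolding monotone_reparam_def by blast

lemma monotone_reparam_restrict:
  assumes "monotone_reparam m L \<phi>" "u \<le> m" "\<forall>t\<in>{0..u}. \<phi> t \<le> L'"
  shows "monotone_reparam u L' \<phi>"
proof -
  have "\<phi> ` {0..u} \<subseteq> {0..L'}"
    using assms(2,3) monotone_reparam_range[OF assms(1)] by force
  then show ?thesis
    using assms unfolding monotone_reparam_def
    by (auto intro: continuous_on_subset monotone_on_subset)
qed

lemma monotone_reparam_shift:
  assumes "monotone_reparam m (c + L) \<phi>" "0 \<le> u" "\<forall>t\<in>{u..m}. c \<le> \<phi> t"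
  shows "monotone_reparam (m - u) L (\<lambda>t. \<phi> (t + u) - c)"
proof -
  have shift: "(\<lambda>t. t + u) ` {0..m - u} \<subseteq> {0..m}" using assms(2) by auto
  have "continuous_on {0..m - u} (\<lambda>t. \<phi> (t + u) - c)"
    using assms(1) unfolding monotone_reparam_def
    by (intro continuous_intros continuous_on_compose2[OF _ _ shift]) auto
  moreover have "mono_on {0..m - u} (\<lambda>t. \<phi> (t + u) - c)"
    using monotone_reparam_le[OF assms(1)] assms(2) by (auto intro!: mono_onI)
  moreover have "\<phi> (t + u) - c \<in> {0..L}" if "t \<in> {0..m - u}" for t
    using monotone_reparam_range[OF assms(1), of "t + u"] assms(2,3) that by auto
  then have "(\<lambda>t. \<phi> (t + u) - c) ` {0..m - u} \<subseteq> {0..L}"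
    by blast
  ultimately show ?thesis unfolding monotone_reparam_def by blast
qed

lemma continuous_map_monotone_reparam:
  "monotone_reparam m L \<phi> \<Longrightarrow> continuous_map (top_of_set {0..m}) (top_of_set {0..L}) \<phi>"
  by (auto simp: monotone_reparam_def)

section \<open>Chains of execution paths\<close>

lemma fst_piece [simp]: "fst (piece c) = fst c"
  by (simp add: piece_def split: prod.splits)

lemma piece_endpoints:
  assumes "0 < l"
  shows "snd (piece (l, \<gamma>, \<phi>)) 0 = \<gamma> (\<phi> 0)" and "snd (piece (l, \<gamma>, \<phi>)) l = \<gamma> (\<phi> 1)"
  using assms by (simp_all add: piece_def mu_def)

lemma continuous_map_piece:
  assumes "0 < l" "continuous_map (top_of_set {0..1}) T \<gamma>" "\<phi> \<in> Iset 1"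
  shows "continuous_map (top_of_set {0..l}) T (snd (piece (l, \<gamma>, \<phi>)))"
proof -
  have "monotone_reparam l 1 (\<phi> \<circ> mu l)"
    using assms by (simp add: Iset_iff_monotone_reparam monotone_reparam_comp monotone_reparam_mu)
  then have "continuous_map (top_of_set {0..l}) T (\<gamma> \<circ> (\<phi> \<circ> mu l))"
    using assms(2) continuous_map_compose continuous_map_monotone_reparam by blast
  then show ?thesis
    by (simp add: piece_def o_assoc)
qed

abbreviation chain_path :: "(real \<times> (real \<Rightarrow> 'a) \<times> (real \<Rightarrow> real)) list \<Rightarrow> real \<Rightarrow> 'a" where
  "chain_path ps \<equiv> moore (map piece ps)"

definition exec_chain :: "(real \<Rightarrow> 'a) set \<Rightarrow> (real \<times> (real \<Rightarrow> 'a) \<times> (real \<Rightarrow> real)) list \<Rightarrow> bool" where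
  "exec_chain E ps \<longleftrightarrow> ps \<noteq> [] \<and> (\<forall>(l, \<gamma>, \<phi>)\<in>set ps. 0 < l \<and> \<gamma> \<in> E \<and> \<phi> \<in> Iset 1) \<and>
     successively (\<lambda>(l, \<gamma>, \<phi>) (l', \<gamma>', \<phi>'). \<gamma> (\<phi> 1) = \<gamma>' (\<phi>' 0)) ps"

lemma fst_comp_piece [simp]: "fst \<circ> piece = fst"
  by (simp add: fun_eq_iff)

lemma total_length_exec_chain_pos: "exec_chain E ps \<Longrightarrow> 0 < total_length ps"
  by (rule total_length_pos) (auto simp: exec_chain_def)

lemma exec_chain_Cons: "exec_chain E (c # ps) \<Longrightarrow> ps \<noteq> [] \<Longrightarrow> exec_chain E ps"
  by (auto simp: exec_chain_def successively_Cons)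

lemma exec_chain_pieces:
  assumes "exec_chain E ps"
  shows "\<forall>c\<in>set (map piece ps). 0 < fst c"
    and "successively (\<lambda>c d. snd c (fst c) = snd d 0) (map piece ps)"
proof -
  show "\<forall>c\<in>set (map piece ps). 0 < fst c"
    using assms by (auto simp: exec_chain_def)
  have "successively (\<lambda>(l, \<gamma>, \<phi>) (l', \<gamma>', \<phi>'). \<gamma> (\<phi> 1) = \<gamma>' (\<phi>' 0)) ps"
    using assms by (simp add: exec_chain_def)
  then show "successively (\<lambda>c d. snd c (fst c) = snd d 0) (map piece ps)"
    unfolding successively_map
    by (rule successively_mono) (use assms in \<open>auto simp: exec_chain_def piece_def mu_def\<close>)
qed

lemma chain_path_endpoints:
  assumes "exec_chain E ps"
  shows "chain_path ps 0 = (case hd ps of (l, \<gamma>, \<phi>) \<Rightarrow> \<gamma> (\<phi> 0))"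
    and "chain_path ps (total_length ps) = (case last ps of (l, \<gamma>, \<phi>) \<Rightarrow> \<gamma> (\<phi> 1))"
proof -
  have ne: "ps \<noteq> []" and pos: "\<forall>(l, \<gamma>, \<phi>)\<in>set ps. 0 < l"
    using assms by (auto simp: exec_chain_def)
  then obtain c ps' where ps: "ps = c # ps'" by (cases ps) auto
  show "chain_path ps 0 = (case hd ps of (l, \<gamma>, \<phi>) \<Rightarrow> \<gamma> (\<phi> 0))"
    using pos ps by (cases c) (simp add: moore_start piece_endpoints)
  obtain l \<gamma> \<phi> where last: "last ps = (l, \<gamma>, \<phi>)" by (metis prod_cases3)
  then have "0 < l" using ne pos last_in_set by fastforce
  then show "chain_path ps (total_length ps) = (case last ps of (l, \<gamma>, \<phi>) \<Rightarrow> \<gamma> (\<phi> 1))"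
    using moore_end[of "map piece ps"] exec_chain_pieces(1)[OF assms] ne last
    by (simp add: last_map piece_endpoints)
qed

lemma exec_chain_append:
  assumes "exec_chain E xs" "exec_chain E ys" "chain_path xs (total_length xs) = chain_path ys 0"
  shows "exec_chain E (xs @ ys)"
  using assms chain_path_endpoints[OF assms(1)] chain_path_endpoints[OF assms(2)]
  by (auto simp: exec_chain_def successively_append_iff split: prod.splits)

lemma chain_path_append:
  assumes "exec_chain E xs" "ys \<noteq> []"
  shows "chain_path (xs @ ys) = moore_comp (total_length xs) (chain_path xs) (chain_path ys)"
  using moore_append[of "map piece xs" "map piece ys"] exec_chain_pieces(1)[OF assms(1)] assms
  by (auto simp: exec_chain_def less_imp_le)

lemma continuous_map_chain_path:
  assumes "exec_chain E ps" "\<forall>\<gamma>\<in>E. continuous_map (top_of_set {0..1}) T \<gamma>"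
  shows "continuous_map (top_of_set {0..total_length ps}) T (chain_path ps)"
proof -
  have "\<forall>c\<in>set (map piece ps). 0 < fst c \<and> continuous_map (top_of_set {0..fst c}) T (snd c)"
    using assms by (auto simp: exec_chain_def continuous_map_piece)
  with continuous_map_moore[of "map piece ps" T] exec_chain_pieces(2)[OF assms(1)] assms(1)
  show ?thesis by (simp add: exec_chain_def)
qed

lemma chain_path_map_paths:
  assumes "\<forall>(l, \<gamma>, \<phi>)\<in>set ps. 0 < l \<and> (\<forall>s\<in>{0..1}. F \<gamma> (\<phi> s) = f (\<gamma> (\<phi> s)))"
    and "ps \<noteq> []" "t \<in> {0..total_length ps}"
  shows "chain_path (map (\<lambda>(l, \<gamma>, \<phi>). (l, F \<gamma>, \<phi>)) ps) t = f (chain_path ps t)"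
proof -
  have "f (chain_path ps t) = moore (map (\<lambda>(l, g). (l, f \<circ> g)) (map piece ps)) t"
    using comp_moore[of "map piece ps" f t] assms(2) by simp
  also have "\<dots> = chain_path (map (\<lambda>(l, \<gamma>, \<phi>). (l, F \<gamma>, \<phi>)) ps) t"
  proof (rule moore_cong)
    have "f (\<gamma> (\<phi> (mu l s))) = F \<gamma> (\<phi> (mu l s))" if "(l, \<gamma>, \<phi>) \<in> set ps" "s \<in> {0..l}" for l \<gamma> \<phi> s
      using assms(1) that by (fastforce simp: mu_def)
    then show "list_all2 (\<lambda>(l, g) (l', h). l = l' \<and> (\<forall>t\<in>{0..l}. g t = h t))
        (map (\<lambda>(l, g). (l, f \<circ> g)) (map piece ps)) (map piece (map (\<lambda>(l, \<gamma>, \<phi>). (l, F \<gamma>, \<phi>)) ps))"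
      unfolding list_all2_map1 list_all2_map2
      by (intro list.rel_refl_strong) (auto simp: piece_def)
  qed (use assms(3) in \<open>simp add: case_prod_unfold o_def\<close>)
  finally show ?thesis by simp
qed

lemma exec_chain_image:
  assumes E: "\<forall>\<gamma>\<in>E. path_in E' (f \<circ> \<gamma>)" and ps: "exec_chain E ps"
  obtains ps' where "exec_chain E' ps'" "total_length ps' = total_length ps"
    "\<forall>t\<in>{0..total_length ps}. chain_path ps' t = f (chain_path ps t)"
proof -
  obtain F where F: "\<forall>\<gamma>\<in>E. F \<gamma> \<in> E' \<and> (\<forall>t\<in>{0..1}. (f \<circ> \<gamma>) t = F \<gamma> t)"
    using bchoice[OF E[unfolded path_in_def Bex_def]] by blast
  have mem: "0 < l" "\<gamma> \<in> E" "\<phi> \<in> Iset 1" if "(l, \<gamma>, \<phi>) \<in> set ps" for l \<gamma> \<phi>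
    using ps that by (auto simp: exec_chain_def)
  have F_eq: "F \<gamma> (\<phi> t) = f (\<gamma> (\<phi> t))" if "(l, \<gamma>, \<phi>) \<in> set ps" "t \<in> {0..1}" for l \<gamma> \<phi> t
  proof -
    have "\<phi> t \<in> {0..1}"
      using mem(3)[OF that(1)] that(2) monotone_reparam_range unfolding Iset_iff_monotone_reparam by blast
    then show ?thesis using F mem(2)[OF that(1)] by simp
  qed
  have agree: "\<forall>(l, \<gamma>, \<phi>)\<in>set ps. 0 < l \<and> (\<forall>s\<in>{0..1}. F \<gamma> (\<phi> s) = f (\<gamma> (\<phi> s)))"
    using mem(1) F_eq by auto
  define ps' where "ps' = map (\<lambda>(l, \<gamma>, \<phi>). (l, F \<gamma>, \<phi>)) ps"
  have "successively (\<lambda>(l, \<gamma>, \<phi>) (l', \<gamma>', \<phi>'). \<gamma> (\<phi> 1) = \<gamma>' (\<phi>' 0)) ps'"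
    unfolding ps'_def successively_map
  proof (rule successively_mono)
    show "successively (\<lambda>(l, \<gamma>, \<phi>) (l', \<gamma>', \<phi>'). \<gamma> (\<phi> 1) = \<gamma>' (\<phi>' 0)) ps"
      using ps by (simp add: exec_chain_def)
  qed (auto simp: F_eq)
  then have "exec_chain E' ps'"
    using ps F unfolding ps'_def exec_chain_def by (auto simp: mem)
  moreover have "total_length ps' = total_length ps"
    unfolding ps'_def by (simp add: case_prod_unfold o_def)
  moreover have "\<forall>t\<in>{0..total_length ps}. chain_path ps' t = f (chain_path ps t)"
    using chain_path_map_paths[OF agree] ps unfolding ps'_def exec_chain_def by blast
  ultimately show thesis using that by blast
qed

section \<open>Reparametrizing chains\<close>

definition chain_reparametrizable :: "(real \<Rightarrow> 'a) set \<Rightarrow> real \<Rightarrow> (real \<Rightarrow> 'a) \<Rightarrow> bool" where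
  "chain_reparametrizable E L g \<longleftrightarrow>
     (\<forall>m \<phi>. 0 < m \<longrightarrow> monotone_reparam m L \<phi> \<longrightarrow>
        (\<exists>ps. exec_chain E ps \<and> total_length ps = m \<and> (\<forall>t\<in>{0..m}. chain_path ps t = g (\<phi> t))))"

lemma chain_reparametrizableD:
  assumes "chain_reparametrizable E L g" "0 < m" "monotone_reparam m L \<phi>"
  obtains ps where "exec_chain E ps" "total_length ps = m" "\<forall>t\<in>{0..m}. chain_path ps t = g (\<phi> t)"
  using assms unfolding chain_reparametrizable_def by blast

lemma chain_reparametrizable_comp:
  assumes "chain_reparametrizable E L g" "monotone_reparam L' L \<psi>"
  shows "chain_reparametrizable E L' (g \<circ> \<psi>)"
  unfolding chain_reparametrizable_def
proof (intro allI impI)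
  fix m \<phi> assume "0 < m" "monotone_reparam m L' \<phi>"
  then obtain ps where "exec_chain E ps" "total_length ps = m" "\<forall>t\<in>{0..m}. chain_path ps t = g (\<psi> (\<phi> t))"
    using assms monotone_reparam_comp[OF assms(2)] chain_reparametrizableD[OF assms(1), of m "\<psi> \<circ> \<phi>"]
    by auto
  then show "\<exists>ps. exec_chain E ps \<and> total_length ps = m \<and> (\<forall>t\<in>{0..m}. chain_path ps t = (g \<circ> \<psi>) (\<phi> t))"
    by auto
qed

lemma chain_reparametrizable_cong:
  assumes "chain_reparametrizable E L g" "\<forall>t\<in>{0..L}. g t = h t"
  shows "chain_reparametrizable E L h"
  unfolding chain_reparametrizable_def
proof (intro allI impI)
  fix m \<phi> assume m: "0 < m" and \<phi>: "monotone_reparam m L \<phi>"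
  then obtain ps where "exec_chain E ps" "total_length ps = m" "\<forall>t\<in>{0..m}. chain_path ps t = g (\<phi> t)"
    using chain_reparametrizableD[OF assms(1)] by blast
  moreover have "g (\<phi> t) = h (\<phi> t)" if "t \<in> {0..m}" for t
    using that \<phi> assms(2) unfolding monotone_reparam_def by blast
  ultimately show "\<exists>ps. exec_chain E ps \<and> total_length ps = m \<and> (\<forall>t\<in>{0..m}. chain_path ps t = h (\<phi> t))"
    by auto
qed

lemma chain_reparametrizable_piece:
  assumes "0 < l" "\<gamma> \<in> E" "\<phi> \<in> Iset 1"
  shows "chain_reparametrizable E l (snd (piece (l, \<gamma>, \<phi>)))"
  unfolding chain_reparametrizable_def
proof (intro allI impI)
  fix m \<psi> assume m: "0 < m" and \<psi>: "monotone_reparam m l \<psi>"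
  let ?\<chi> = "\<phi> \<circ> mu l \<circ> \<psi> \<circ> (\<lambda>r. m * r)"
  have "?\<chi> \<in> Iset 1"
    using assms(3) monotone_reparam_mu[OF assms(1)] \<psi> monotone_reparam_scale[of m] m
    unfolding Iset_iff_monotone_reparam by (auto intro!: monotone_reparam_comp)
  then have "exec_chain E [(m, \<gamma>, ?\<chi>)]"
    using m assms by (simp add: exec_chain_def)
  moreover have "\<forall>t\<in>{0..m}. chain_path [(m, \<gamma>, ?\<chi>)] t = snd (piece (l, \<gamma>, \<phi>)) (\<psi> t)"
    using m by (simp add: piece_def mu_def)
  ultimately show "\<exists>ps. exec_chain E ps \<and> total_length ps = m \<and>
      (\<forall>t\<in>{0..m}. chain_path ps t = snd (piece (l, \<gamma>, \<phi>)) (\<psi> t))"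
    by (intro exI[of _ "[(m, \<gamma>, ?\<chi>)]"]) simp
qed

lemma exec_chain_moore_comp:
  assumes xs: "exec_chain E xs" "\<forall>t\<in>{0..total_length xs}. chain_path xs t = p t"
    and ys: "exec_chain E ys" "\<forall>t\<in>{0..total_length ys}. chain_path ys t = q t"
    and "p (total_length xs) = q 0"
  shows "exec_chain E (xs @ ys)"
    and "\<forall>t\<in>{0..total_length xs + total_length ys}.
           chain_path (xs @ ys) t = moore_comp (total_length xs) p q t"
proof -
  have nonneg: "0 \<le> total_length xs" "0 \<le> total_length ys"
    using total_length_exec_chain_pos xs(1) ys(1) by (auto intro: less_imp_le)
  then show "exec_chain E (xs @ ys)"
    using assms by (intro exec_chain_append) auto
  show "\<forall>t\<in>{0..total_length xs + total_length ys}.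
      chain_path (xs @ ys) t = moore_comp (total_length xs) p q t"
    using chain_path_append[OF xs(1)] ys(1) xs(2) ys(2)
    by (auto simp: exec_chain_def intro!: moore_comp_cong)
qed

lemma chain_reparametrizable_moore_comp_split:
  assumes g1: "chain_reparametrizable E L1 g1" and g2: "chain_reparametrizable E L2 g2"
    and junction: "g1 L1 = g2 0" and \<phi>: "monotone_reparam m (L1 + L2) \<phi>"
    and u: "0 < u" "u < m" "\<phi> u = L1"
  obtains ps where "exec_chain E ps" "total_length ps = m"
    "\<forall>t\<in>{0..m}. chain_path ps t = moore_comp L1 g1 g2 (\<phi> t)"
proof -
  have le: "\<phi> t \<le> L1" if "t \<in> {0..u}" for t
    using monotone_reparam_le[OF \<phi>, of t u] that u by auto
  have ge: "\<forall>t\<in>{u..m}. L1 \<le> \<phi> t"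
    using monotone_reparam_le[OF \<phi>, of u] u by auto
  let ?\<psi> = "\<lambda>t. \<phi> (t + u) - L1"
  obtain xs where xs: "exec_chain E xs" "total_length xs = u" "\<forall>t\<in>{0..u}. chain_path xs t = g1 (\<phi> t)"
    using chain_reparametrizableD[OF g1 u(1) monotone_reparam_restrict[OF \<phi>]] u le by auto
  obtain ys where ys: "exec_chain E ys" "total_length ys = m - u"
    "\<forall>t\<in>{0..m - u}. chain_path ys t = g2 (?\<psi> t)"
    using chain_reparametrizableD[OF g2 _ monotone_reparam_shift[OF \<phi> less_imp_le[OF u(1)] ge]] u
    by auto
  have "exec_chain E (xs @ ys)"
    and val: "\<forall>t\<in>{0..m}. chain_path (xs @ ys) t = moore_comp u (g1 \<circ> \<phi>) (g2 \<circ> ?\<psi>) t"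
    using exec_chain_moore_comp[OF xs(1) _ ys(1), of "g1 \<circ> \<phi>" "g2 \<circ> ?\<psi>"] xs ys u junction by auto
  moreover have "moore_comp u (g1 \<circ> \<phi>) (g2 \<circ> ?\<psi>) t = moore_comp L1 g1 g2 (\<phi> t)" if "t \<in> {0..m}" for t
  proof (cases "t \<le> u")
    case True
    then show ?thesis using le[of t] that by (simp add: moore_comp_def)
  next
    case False
    then have "L1 \<le> \<phi> t" using ge that by auto
    with False junction show ?thesis by (simp add: moore_comp_def)
  qed
  ultimately show thesis
    using that xs(2) ys(2) by simp
qed

lemma chain_reparametrizable_moore_comp:
  assumes g1: "chain_reparametrizable E L1 g1" and g2: "chain_reparametrizable E L2 g2"
    and junction: "g1 L1 = g2 0"
  shows "chain_reparametrizable E (L1 + L2) (moore_comp L1 g1 g2)"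
  unfolding chain_reparametrizable_def
proof (intro allI impI)
  fix m \<phi> assume m: "0 < m" and \<phi>: "monotone_reparam m (L1 + L2) \<phi>"
  have mono: "\<phi> s \<le> \<phi> t" if "s \<in> {0..m}" "t \<in> {0..m}" "s \<le> t" for s t
    using monotone_reparam_le[OF \<phi>] that .
  consider (left) "\<phi> m \<le> L1" | (right) "L1 \<le> \<phi> 0" | (split) "\<phi> 0 < L1" "L1 < \<phi> m"
    by linarith
  then show "\<exists>ps. exec_chain E ps \<and> total_length ps = m \<and>
      (\<forall>t\<in>{0..m}. chain_path ps t = moore_comp L1 g1 g2 (\<phi> t))"
  proof cases
    case left
    then have le: "\<phi> t \<le> L1" if "t \<in> {0..m}" for t
      using mono[of t m] that m by auto
    then obtain ps where "exec_chain E ps" "total_length ps = m" "\<forall>t\<in>{0..m}. chain_path ps t = g1 (\<phi> t)"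
      using chain_reparametrizableD[OF g1 m monotone_reparam_restrict[OF \<phi>]] by auto
    then show ?thesis
      using le by (auto simp: moore_comp_def)
  next
    case right
    then have ge: "\<forall>t\<in>{0..m}. L1 \<le> \<phi> t"
      using mono[of 0] m by fastforce
    then obtain ps where "exec_chain E ps" "total_length ps = m"
      "\<forall>t\<in>{0..m}. chain_path ps t = g2 (\<phi> (t + 0) - L1)"
      using chain_reparametrizableD[OF g2 _ monotone_reparam_shift[OF \<phi> order_refl ge]] m by auto
    then show ?thesis
      using ge moore_comp_right[of g1 L1 g2, OF junction] by auto
  next
    case split
    then obtain u where u: "0 \<le> u" "u \<le> m" "\<phi> u = L1"
      using IVT'[of \<phi> 0 L1 m] \<phi> m unfolding monotone_reparam_def by auto
    with split have "0 < u" "u < m" by (auto simp: order.order_iff_strict)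
    from chain_reparametrizable_moore_comp_split[OF g1 g2 junction \<phi> this u(3)]
    show ?thesis by blast
  qed
qed

lemma chain_reparametrizable_chain_path:
  "exec_chain E ps \<Longrightarrow> chain_reparametrizable E (total_length ps) (chain_path ps)"
proof (induction ps)
  case (Cons c ps)
  obtain l \<gamma> \<phi> where c: "c = (l, \<gamma>, \<phi>)" by (metis prod_cases3)
  have l: "0 < l" and "\<gamma> \<in> E" "\<phi> \<in> Iset 1" using Cons.prems c by (auto simp: exec_chain_def)
  then have piece: "chain_reparametrizable E l (snd (piece c))"
    unfolding c by (rule chain_reparametrizable_piece)
  show ?case
  proof (cases "ps = []")
    case True
    with piece c show ?thesis by simp
  next
    case False
    then obtain l' \<gamma>' \<phi>' ps' where ps: "ps = (l', \<gamma>', \<phi>') # ps'" by (metis list.exhaust prod_cases3)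
    have tail: "exec_chain E ps" using Cons.prems False by (rule exec_chain_Cons)
    have "\<gamma> (\<phi> 1) = \<gamma>' (\<phi>' 0)"
      using Cons.prems unfolding c ps exec_chain_def by simp
    then have "snd (piece c) l = chain_path ps 0"
      using chain_path_endpoints(1)[OF tail] by (simp add: c ps piece_endpoints[OF l])
    with piece Cons.IH[OF tail] have "chain_reparametrizable E (l + total_length ps)
        (moore_comp l (snd (piece c)) (chain_path ps))"
      by (rule chain_reparametrizable_moore_comp)
    then show ?thesis using False c by (simp add: moore_Cons)
  qed
qed (simp add: exec_chain_def)

section \<open>The functor Sp\<close>

lemma mem_Sp_paths_iff:
  "g \<in> Sp_paths X \<longleftrightarrow> (\<exists>x\<in>topspace (mtop X). \<forall>t\<in>{0..1}. g t = x) \<or>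
     (\<exists>ps. exec_chain (epaths X) ps \<and> total_length ps = 1 \<and> (\<forall>t\<in>{0..1}. g t = chain_path ps t))"
  unfolding Sp_paths_def exec_chain_def successively_conv_nth by (simp add: case_prod_unfold conj_ac)

lemma Sp_paths_cases:
  assumes "g \<in> Sp_paths X"
  obtains (const) x where "x \<in> topspace (mtop X)" "\<forall>t\<in>{0..1}. g t = x"
  | (chain) ps where "exec_chain (epaths X) ps" "total_length ps = 1" "\<forall>t\<in>{0..1}. g t = chain_path ps t"
  using assms unfolding mem_Sp_paths_iff by blast

lemma mem_Sp_paths_iff_reparametrizable:
  "g \<in> Sp_paths X \<longleftrightarrow> (\<exists>x\<in>topspace (mtop X). \<forall>t\<in>{0..1}. g t = x) \<or> chain_reparametrizable (epaths X) 1 g"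
proof -
  have "(\<exists>ps. exec_chain (epaths X) ps \<and> total_length ps = 1 \<and> (\<forall>t\<in>{0..1}. g t = chain_path ps t))
      \<longleftrightarrow> chain_reparametrizable (epaths X) 1 g"
  proof
    assume "\<exists>ps. exec_chain (epaths X) ps \<and> total_length ps = 1 \<and> (\<forall>t\<in>{0..1}. g t = chain_path ps t)"
    then show "chain_reparametrizable (epaths X) 1 g"
      by (metis chain_reparametrizable_chain_path chain_reparametrizable_cong)
  next
    assume "chain_reparametrizable (epaths X) 1 g"
    from chain_reparametrizableD[OF this _ monotone_reparam_id]
    show "\<exists>ps. exec_chain (epaths X) ps \<and> total_length ps = 1 \<and> (\<forall>t\<in>{0..1}. g t = chain_path ps t)"
      by (metis id_apply zero_less_one)
  qed
  then show ?thesis by (simp add: mem_Sp_paths_iff)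
qed

lemma Sp_paths_comp_Iset:
  assumes "g \<in> Sp_paths X" "\<phi> \<in> Iset 1"
  shows "g \<circ> \<phi> \<in> Sp_paths X"
  using assms chain_reparametrizable_comp[of "epaths X" 1 g 1 \<phi>]
  unfolding mem_Sp_paths_iff_reparametrizable Iset_iff_monotone_reparam
  by (auto dest: monotone_reparam_range)

lemma Sp_paths_norm_comp:
  assumes g1: "g1 \<in> Sp_paths X" and g2: "g2 \<in> Sp_paths X" and junction: "g1 1 = g2 0"
  shows "norm_comp g1 g2 \<in> Sp_paths X"
proof (cases "chain_reparametrizable (epaths X) 1 g1 \<or> chain_reparametrizable (epaths X) 1 g2")
  case True
  have other_reparametrizable: "chain_reparametrizable (epaths X) 1 h"
    if "chain_reparametrizable (epaths X) 1 g" "h \<in> Sp_paths X" "c \<in> {0..1}" "c' \<in> {0..1}" "h c' = g c"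
    for g h c c'
  proof -
    \<comment> \<open>If h is constant, it is the reparametrization of g by the constant map c.\<close>
    have "chain_reparametrizable (epaths X) 1 (g \<circ> (\<lambda>_. c))"
      using that by (intro chain_reparametrizable_comp monotone_reparam_const)
    then show ?thesis
      using that unfolding mem_Sp_paths_iff_reparametrizable
      by (auto intro: chain_reparametrizable_cong)
  qed
  have "chain_reparametrizable (epaths X) 1 g1" "chain_reparametrizable (epaths X) 1 g2"
    using True other_reparametrizable[of g1 g2 1 0] other_reparametrizable[of g2 g1 0 1] g1 g2 junction
    by auto
  then have "chain_reparametrizable (epaths X) (1/2 + 1/2)
      (moore_comp (1/2) (g1 \<circ> mu (1/2)) (g2 \<circ> mu (1/2)))"
    using junction by (intro chain_reparametrizable_moore_comp chain_reparametrizable_comp)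
      (auto intro: monotone_reparam_mu simp: mu_def)
  then show ?thesis
    by (simp add: norm_comp_eq_moore_comp mem_Sp_paths_iff_reparametrizable)
next
  case False
  then obtain x y where "x \<in> topspace (mtop X)" "\<forall>t\<in>{0..1}. g1 t = x" "\<forall>t\<in>{0..1}. g2 t = y"
    using g1 g2 unfolding mem_Sp_paths_iff_reparametrizable by blast
  moreover have "x = y" using calculation junction by auto
  ultimately show ?thesis
    unfolding mem_Sp_paths_iff norm_comp_eq_moore_comp by (auto simp: moore_comp_def mu_def)
qed

lemma continuous_map_Sp_path:
  assumes "is_mdspace X" "g \<in> Sp_paths X"
  shows "continuous_map (top_of_set {0..1}) (mtop X) g"
  using assms(2)
proof (cases rule: Sp_paths_cases)
  case (const x)
  then show ?thesis by (auto intro: continuous_map_eq[of _ _ "\<lambda>_. x"])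
next
  case (chain ps)
  then show ?thesis
    using continuous_map_chain_path[of "epaths X" ps "mtop X"] assms(1)
    by (auto simp: is_mdspace_def intro: continuous_map_eq)
qed

lemma Sp_paths_image:
  assumes "mdmap X Y f" "g \<in> Sp_paths X"
  shows "f \<circ> g \<in> Sp_paths Y"
  using assms(2)
proof (cases rule: Sp_paths_cases)
  case (const x)
  then show ?thesis
    using assms(1) by (auto simp: mdmap_def mem_Sp_paths_iff continuous_map_def)
next
  case (chain ps)
  obtain ps' where "exec_chain (epaths Y) ps'" "total_length ps' = 1"
    "\<forall>t\<in>{0..1}. chain_path ps' t = f (chain_path ps t)"
    using assms(1) chain exec_chain_image[of "epaths X" "epaths Y" f ps]
    by (auto simp: mdmap_def)
  with chain show ?thesis
    unfolding mem_Sp_paths_iff by auto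
qed

lemma path_in_memI: "g \<in> S \<Longrightarrow> path_in S g"
  unfolding path_in_def by blast

theorem proposition3p4:
  shows "(\<forall>X :: 'a mdspace. is_mdspace X \<longrightarrow> is_dspace (Sp X)) \<and>
         (\<forall>(X :: 'a mdspace) (Y :: 'b mdspace) f. is_mdspace X \<and> is_mdspace Y \<and> mdmap X Y f
              \<longrightarrow> dmap (Sp X) (Sp Y) (Sp_map f)) \<and>
         Sp_map (id :: 'a \<Rightarrow> 'a) = id \<and>
         (\<forall>(f :: 'a \<Rightarrow> 'b) (g :: 'b \<Rightarrow> 'c). Sp_map (g \<circ> f) = Sp_map g \<circ> Sp_map f)"
proof (intro conjI allI impI)
  fix X :: "'a mdspace"
  assume "is_mdspace X"
  then show "is_dspace (Sp X)"
    unfolding is_dspace_def Sp_def dspace.simps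
    by (auto simp: is_mdspace_def mem_Sp_paths_iff intro!: path_in_memI continuous_map_Sp_path
        Sp_paths_norm_comp Sp_paths_comp_Iset)
next
  fix X :: "'a mdspace" and Y :: "'b mdspace" and f
  assume "is_mdspace X \<and> is_mdspace Y \<and> mdmap X Y f"
  then show "dmap (Sp X) (Sp Y) (Sp_map f)"
    by (auto simp: dmap_def mdmap_def Sp_def Sp_map_def intro!: path_in_memI Sp_paths_image)
qed (simp_all add: Sp_map_def)

end
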